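(* For any $\gamma>0$ and any continuous function $f:[0,1]\to\mathbb R$, there exists a nondecreasing function $g^*:[0,1]\to\mathbb R$ such that $$\lambda(\{x\in[0,1]:|f(x)-g^*(x)|>\gamma\})=\inf_{g\in\mathcal M}\lambda(\{x\in[0,1]:|f(x)-g(x)|>\gamma\}).$$
   Context: $\mathcal M$ is the set of monotone nondecreasing functions $g:[0,1]\to\mathbb R$, and $\lambda$ is Lebesgue measure. *)

theory Defs
  imports "HOL-Analysis.Analysis"
begin

definition monoClass :: "(real \<Rightarrow> real) set" where
  "monoClass = {g. mono_on {0..1} g}"

definition errMeas :: "real \<Rightarrow> (real \<Rightarrow> real) \<Rightarrow> (real \<Rightarrow> real) \<Rightarrow> real" where
  "errMeas \<gamma> f g = measure lebesgue {x \<in> {0..1}. \<bar>f x - g x\<bar> > \<gamma>}"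

end

theory Submission
  imports Defs "HOL-Probability.Helly_Selection"
begin

(* A minimising sequence for the error measure can be taken uniformly bounded: clipping at
   +-(max |f| + |gamma|) and extending constantly outside [0,1] keeps it monotone and never enlarges
   the error set. Helly's selection theorem then gives a subsequence converging to a monotone G
   outside a countable, hence null, set. At every other point where |f - G| > gamma, eventually
   |f - g_n| > gamma too, so up to a null set the error set of G lies in the lim inf of the error
   sets, and continuity of measure from below bounds its measure by the infimum. *)

definition right_limit :: "(real \<Rightarrow> real) \<Rightarrow> real \<Rightarrow> real" where
  "right_limit g x = Inf (g ` {x<..})"

lemma right_limit_lower:
  assumes "mono g"
  shows "g x \<le> right_limit g x"
  unfolding right_limit_def
  by (rule cInf_greatest) (auto intro: monoD[OF assms] gt_ex)

lemma right_limit_upper: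
  assumes "mono g" "x < y"
  shows "right_limit g x \<le> g y"
  unfolding right_limit_def
  by (rule cInf_lower) (use assms in \<open>auto intro!: bdd_belowI2[of _ "g x"] monoD[OF assms(1)]\<close>)

lemma tendsto_right_limit:
  assumes "mono g"
  shows "(g \<longlongrightarrow> right_limit g x) (at_right x)"
  using Lim_right_bound[of UNIV x g "g x"] assms by (simp add: right_limit_def monoD)

lemma mono_right_limit:
  assumes "mono g"
  shows "mono (right_limit g)"
  by (rule monoI) (metis assms dual_order.order_iff_strict right_limit_lower right_limit_upper order_trans)

lemma right_limit_continuous_at_right:
  assumes "mono g"
  shows "continuous (at_right x) (right_limit g)"
  unfolding continuous_within order_tendsto_iff eventually_at_right[OF less_add_one]
proof safe
  fix u assume "right_limit g x < u"
  then have "Inf (g ` {x<..}) < u" and "g (x + 1) \<in> g ` {x<..}"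
    by (simp_all add: right_limit_def)
  then have "\<exists>v\<in>g ` {x<..}. v < u"
    by (metis cInf_lessD empty_iff)
  then obtain z where "x < z" "g z < u"
    by auto
  moreover have "right_limit g y < u" if "y < z" for y
    using right_limit_upper[OF assms that] \<open>g z < u\<close> by linarith
  ultimately show "\<exists>b>x. \<forall>y>x. y < b \<longrightarrow> right_limit g y < u"
    by (intro exI[of _ z]) simp
next
  fix l assume "l < right_limit g x"
  then have "l < right_limit g y" if "x \<le> y" for y
    using monoD[OF mono_right_limit[OF assms] that] by linarith
  then show "\<exists>b>x. \<forall>y>x. y < b \<longrightarrow> l < right_limit g y"
    by (intro exI[of _ "x + 1"]) simp
qed

lemma right_limit_eq_at_isCont:
  assumes "mono g" "isCont g x"
  shows "right_limit g x = g x"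
proof -
  have "(g \<longlongrightarrow> g x) (at_right x)"
    using assms(2) unfolding isCont_def by (rule tendsto_within_subset) simp
  with tendsto_right_limit[OF assms(1)] show ?thesis
    using tendsto_unique[OF trivial_limit_at_right_real] by blast
qed

(* The library version needs right-continuous functions; passing to right limits changes each
   f n only at its countably many jumps. *)
lemma Helly_selection_mono:
  fixes f :: "nat \<Rightarrow> real \<Rightarrow> real"
  assumes mono: "\<And>n. mono (f n)" and bdd: "\<And>n x. \<bar>f n x\<bar> \<le> M"
  obtains s F where "strict_mono s" "mono F" "countable {x. \<not> (\<lambda>n. f (s n) x) \<longlonglongrightarrow> F x}"
proof -
  define f' where "f' n = right_limit (f n)" for n
  have "\<bar>f' n x\<bar> \<le> M" for n x
    using right_limit_lower[OF mono, of n x] right_limit_upper[OF mono, of x "x + 1" n]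
      bdd[of n x] bdd[of n "x + 1"]
    by (simp add: f'_def abs_le_iff)
  then have "\<exists>s. strict_mono s \<and> (\<exists>F. (\<forall>x. continuous (at_right x) F) \<and> mono F \<and>
      (\<forall>x. \<bar>F x\<bar> \<le> M) \<and> (\<forall>x. isCont F x \<longrightarrow> (\<lambda>n. f' (s n) x) \<longlonglongrightarrow> F x))"
    unfolding f'_def
    by (intro Helly_selection mono_right_limit right_limit_continuous_at_right mono)
  then obtain s F where s: "strict_mono s" and F: "mono F"
    and conv: "\<And>x. isCont F x \<Longrightarrow> (\<lambda>n. f' (s n) x) \<longlonglongrightarrow> F x"
    by blast
  have "(\<lambda>n. f (s n) x) \<longlonglongrightarrow> F x" if "isCont F x" "\<And>n. isCont (f n) x" for x
    using conv[OF that(1)] by (simp add: f'_def right_limit_eq_at_isCont[OF mono that(2)])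
  then have "{x. \<not> (\<lambda>n. f (s n) x) \<longlonglongrightarrow> F x} \<subseteq> {x. \<not> isCont F x} \<union> (\<Union>n. {x. \<not> isCont (f n) x})"
    by blast
  moreover have "countable ({x. \<not> isCont F x} \<union> (\<Union>n. {x. \<not> isCont (f n) x}))"
    using mono_ctble_discont[OF F] mono_ctble_discont[OF mono] by (intro countable_Un countable_UN) auto
  ultimately show thesis
    by (rule that[OF s F countable_subset])
qed

lemma measure_liminf_le_limit:
  assumes E: "\<And>n. E n \<in> fmeasurable M" and fin: "(\<Union>n. E n) \<in> fmeasurable M"
    and lim: "(\<lambda>n. measure M (E n)) \<longlonglongrightarrow> L"
  shows "measure M (\<Union>N. \<Inter>n\<in>{N..}. E n) \<le> L"
proof -
  define A where "A N = (\<Inter>n\<in>{N..}. E n)" for N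
  have A: "A N \<in> sets M" for N
    unfolding A_def using E by (intro sets.countable_INT') auto
  have bound: "measure M (A N) \<le> L" for N
  proof -
    have "measure M (A N) \<le> measure M (E n)" if "N \<le> n" for n
      using A E that by (intro measure_mono_fmeasurable) (auto simp: A_def)
    then show ?thesis
      by (intro LIMSEQ_le_const[OF lim]) blast
  qed
  have "emeasure M (\<Union>N. A N) \<le> emeasure M (\<Union>n. E n)"
    using A E by (intro emeasure_mono) (auto simp: A_def)
  then have "(\<lambda>N. measure M (A N)) \<longlonglongrightarrow> measure M (\<Union>N. A N)"
    using A fin by (intro Lim_measure_incseq) (auto simp: incseq_def A_def fmeasurable_def)
  then show ?thesis
    unfolding A_def[symmetric] using LIMSEQ_le_const2 bound by blast
qed

lemma INF_minimizing_sequence: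
  fixes F :: "'a \<Rightarrow> real"
  assumes "A \<noteq> {}" and "bdd_below (F ` A)"
  obtains h where "\<And>n. h n \<in> A" "(\<lambda>n. F (h n)) \<longlonglongrightarrow> (INF a\<in>A. F a)"
proof -
  have "(INF a\<in>A. F a) \<in> closure (F ` A)"
    using assms by (intro closure_contains_Inf) auto
  then obtain u where u: "\<forall>n. u n \<in> F ` A" and u_lim: "u \<longlonglongrightarrow> (INF a\<in>A. F a)"
    unfolding closure_sequential by blast
  have "\<forall>n. \<exists>a. a \<in> A \<and> u n = F a"
    using u by blast
  then obtain h where "\<forall>n. h n \<in> A \<and> u n = F (h n)"
    using choice[of "\<lambda>n a. a \<in> A \<and> u n = F a"] by blast
  moreover from this have "u = (\<lambda>n. F (h n))"
    by auto
  ultimately show thesis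
    using that[of h] u_lim by blast
qed

definition errSet :: "real \<Rightarrow> (real \<Rightarrow> real) \<Rightarrow> (real \<Rightarrow> real) \<Rightarrow> real set" where
  "errSet \<gamma> f g = {x \<in> {0..1}. \<gamma> < \<bar>f x - g x\<bar>}"

lemma errMeas_eq_measure_errSet: "errMeas \<gamma> f g = measure lebesgue (errSet \<gamma> f g)"
  by (simp add: errMeas_def errSet_def)

lemma bdd_below_errMeas: "bdd_below (errMeas \<gamma> f ` A)"
  by (auto simp: errMeas_def intro!: bdd_belowI[of _ 0])

lemma errSet_cong: "(\<And>x. x \<in> {0..1} \<Longrightarrow> g x = h x) \<Longrightarrow> errSet \<gamma> f g = errSet \<gamma> f h"
  by (auto simp: errSet_def)

lemma errSet_lmeasurable:
  assumes f: "continuous_on {0..1} f" and g: "mono_on {0..1} g"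
  shows "errSet \<gamma> f g \<in> lmeasurable"
proof -
  have [measurable]: "f \<in> borel_measurable (restrict_space borel {0..1})"
    "g \<in> borel_measurable (restrict_space borel {0..1})"
    using borel_measurable_continuous_on_restrict[OF f] borel_measurable_mono_on_fnc[OF g] .
  have "{x \<in> space (restrict_space borel {0..1}). \<gamma> < \<bar>f x - g x\<bar>} \<in> sets (restrict_space borel {0..1})"
    by measurable
  then have "errSet \<gamma> f g \<in> sets borel"
    by (simp add: errSet_def sets_restrict_space_iff)
  then have "errSet \<gamma> f g \<in> sets lebesgue"
    by auto
  moreover have "{0..1::real} \<in> lmeasurable"
    by (metis cbox_interval lmeasurable_cbox)
  ultimately show ?thesis
    by (rule fmeasurableI2[rotated 2]) (auto simp: errSet_def)
qed

lemma errSet_truncation_subset: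
  assumes "\<And>x. x \<in> {0..1} \<Longrightarrow> \<bar>f x\<bar> \<le> K"
  shows "errSet \<gamma> f (\<lambda>x. max (- (K + \<bar>\<gamma>\<bar>)) (min (K + \<bar>\<gamma>\<bar>) (h x))) \<subseteq> errSet \<gamma> f h"
proof
  fix x assume x: "x \<in> errSet \<gamma> f (\<lambda>x. max (- (K + \<bar>\<gamma>\<bar>)) (min (K + \<bar>\<gamma>\<bar>) (h x)))"
  then have "x \<in> {0..1}"
    by (simp add: errSet_def)
  have "\<gamma> < \<bar>f x - h x\<bar>"
  proof (cases "\<bar>h x\<bar> \<le> K + \<bar>\<gamma>\<bar>")
    case True
    then show ?thesis
      using x by (simp add: errSet_def abs_le_iff)
  next
    case False
    then show ?thesis
      using assms[OF \<open>x \<in> {0..1}\<close>] by linarith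
  qed
  with \<open>x \<in> {0..1}\<close> show "x \<in> errSet \<gamma> f h"
    by (simp add: errSet_def)
qed

lemma errMeas_bounded_minimizing_sequence:
  assumes f: "continuous_on {0..1} f"
  obtains g C where "\<And>n. mono (g n)" "\<And>n x. \<bar>g n x\<bar> \<le> C"
    "(\<lambda>n. errMeas \<gamma> f (g n)) \<longlonglongrightarrow> (INF h\<in>monoClass. errMeas \<gamma> f h)"
proof -
  let ?I = "INF h\<in>monoClass. errMeas \<gamma> f h"
  have "\<exists>K. \<forall>x\<in>{0..1}. \<bar>f x\<bar> \<le> K"
    using compact_imp_bounded[OF compact_continuous_image[OF f compact_Icc]]
    by (auto simp: bounded_iff)
  then obtain K where K: "\<And>x. x \<in> {0..1} \<Longrightarrow> \<bar>f x\<bar> \<le> K"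
    by blast
  have "(\<lambda>x. 0) \<in> monoClass"
    by (simp add: monoClass_def mono_onI)
  then obtain h where h: "\<And>n. h n \<in> monoClass" and h_lim: "(\<lambda>n. errMeas \<gamma> f (h n)) \<longlonglongrightarrow> ?I"
    using INF_minimizing_sequence[OF _ bdd_below_errMeas] by blast
  define C where "C = K + \<bar>\<gamma>\<bar>"
  define g where "g n x = max (- C) (min C (h n (max 0 (min 1 x))))" for n x
  have g_mono: "mono (g n)" for n
    unfolding g_def using h[of n]
    by (intro monoI max.mono min.mono order_refl mono_onD[of "{0..1}" "h n"])
      (auto simp: monoClass_def)
  have "0 \<le> C"
    using K[of 0] by (simp add: C_def)
  then have g_bdd: "\<bar>g n x\<bar> \<le> C" for n x
    unfolding g_def by linarith
  have "errMeas \<gamma> f (g n) \<le> errMeas \<gamma> f (h n)" for n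
  proof -
    have "errSet \<gamma> f (g n) \<subseteq> errSet \<gamma> f (h n)"
      using errSet_truncation_subset[OF K, where \<gamma>=\<gamma> and h="h n"] errSet_cong[of "g n" _ \<gamma> f]
      by (simp add: g_def C_def)
    then show ?thesis
      unfolding errMeas_eq_measure_errSet using h[of n] g_mono[of n]
      by (intro measure_mono_fmeasurable fmeasurableD errSet_lmeasurable[OF f])
        (auto simp: monoClass_def mono_imp_mono_on)
  qed
  moreover have "?I \<le> errMeas \<gamma> f (g n)" for n
    using g_mono[of n] by (intro cINF_lower bdd_below_errMeas) (simp add: monoClass_def mono_imp_mono_on)
  ultimately have "(\<lambda>n. errMeas \<gamma> f (g n)) \<longlonglongrightarrow> ?I"
    by (intro tendsto_sandwich[OF _ _ tendsto_const h_lim]) auto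
  with g_mono g_bdd show thesis
    using that by blast
qed

lemma errMeas_le_limit:
  assumes f: "continuous_on {0..1} f" and g: "\<And>n. mono_on {0..1} (g n)"
    and G: "mono_on {0..1} G" and conv: "countable {x. \<not> (\<lambda>n. g n x) \<longlonglongrightarrow> G x}"
    and lim: "(\<lambda>n. errMeas \<gamma> f (g n)) \<longlonglongrightarrow> L"
  shows "errMeas \<gamma> f G \<le> L"
proof -
  let ?D = "{x. \<not> (\<lambda>n. g n x) \<longlonglongrightarrow> G x}"
  let ?E = "\<lambda>n. errSet \<gamma> f (g n)"
  have E: "?E n \<in> lmeasurable" for n
    using errSet_lmeasurable[OF f g] .
  have E_Union: "(\<Union>n. ?E n) \<in> lmeasurable"
    using E by (intro bounded_set_imp_lmeasurable sets.countable_UN')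
      (auto simp: errSet_def intro: bounded_subset[OF bounded_closed_interval[of 0 1]])
  have "?D \<in> null_sets lebesgue"
    using countable_imp_null_set_lborel[OF conv] by (rule null_sets_completionI)
  then have "errMeas \<gamma> f G = measure lebesgue (errSet \<gamma> f G - ?D)"
    using errSet_lmeasurable[OF f G] by (simp add: errMeas_eq_measure_errSet measure_Diff_null_set)
  also have "\<dots> \<le> measure lebesgue (\<Union>N. \<Inter>n\<in>{N..}. ?E n)"
  proof (rule measure_mono_fmeasurable)
    show "errSet \<gamma> f G - ?D \<subseteq> (\<Union>N. \<Inter>n\<in>{N..}. ?E n)"
    proof
      fix x assume x: "x \<in> errSet \<gamma> f G - ?D"
      then have "(\<lambda>n. g n x) \<longlonglongrightarrow> G x" and "\<gamma> < \<bar>f x - G x\<bar>"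
        by (auto simp: errSet_def)
      then have "eventually (\<lambda>n. \<gamma> < \<bar>f x - g n x\<bar>) sequentially"
        by (intro order_tendstoD(1)[OF tendsto_rabs[OF tendsto_diff[OF tendsto_const]]])
      with x show "x \<in> (\<Union>N. \<Inter>n\<in>{N..}. ?E n)"
        by (auto simp: eventually_sequentially errSet_def)
    qed
    show "errSet \<gamma> f G - ?D \<in> sets lebesgue"
      using errSet_lmeasurable[OF f G] \<open>?D \<in> null_sets lebesgue\<close> by auto
    show "(\<Union>N. \<Inter>n\<in>{N..}. ?E n) \<in> lmeasurable"
      using E E_Union by (intro fmeasurableI2[OF E_Union] sets.countable_UN' sets.countable_INT') auto
  qed
  also have "\<dots> \<le> L"
    using lim by (intro measure_liminf_le_limit[OF E E_Union]) (simp add: errMeas_eq_measure_errSet)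
  finally show ?thesis .
qed

theorem mainTheorem11:
  fixes f :: "real \<Rightarrow> real" and \<gamma> :: real
  assumes "\<gamma> > 0" and "continuous_on {0..1} f"
  shows "\<exists>g\<in>monoClass. errMeas \<gamma> f g = (INF h\<in>monoClass. errMeas \<gamma> f h)"
proof -
  let ?I = "INF h\<in>monoClass. errMeas \<gamma> f h"
  obtain g C where g: "\<And>n. mono (g n)" "\<And>n x. \<bar>g n x\<bar> \<le> C"
    and lim: "(\<lambda>n. errMeas \<gamma> f (g n)) \<longlonglongrightarrow> ?I"
    using errMeas_bounded_minimizing_sequence[OF assms(2)] by blast
  obtain s G where s: "strict_mono s" and G: "mono G"
    and conv: "countable {x. \<not> (\<lambda>n. g (s n) x) \<longlonglongrightarrow> G x}"
    using Helly_selection_mono[of g C] g by blast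
  have G_mem: "G \<in> monoClass"
    using G by (simp add: monoClass_def mono_imp_mono_on)
  have "errMeas \<gamma> f G \<le> ?I"
    using LIMSEQ_subseq_LIMSEQ[OF lim s] g(1) G conv
    by (intro errMeas_le_limit[OF assms(2)]) (auto simp: comp_def mono_imp_mono_on)
  moreover have "?I \<le> errMeas \<gamma> f G"
    by (rule cINF_lower[OF bdd_below_errMeas G_mem])
  ultimately show ?thesis
    using G_mem by (intro bexI[of _ G]) auto
qed

end
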